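(* Let $p,q\ge2$, $f(z,w)=z^p+w^q$, and let $a,b\in\mathbb{C}\setminus\{0\}$. Let $c_1,c_2\in\mathbb{C}\setminus\{0\}$ satisfy $c_1^p=a\bar c_1$ and $c_2^q=b\bar c_2$, and put $\mu=a\bar c_1/(b\bar c_2)$. If $P(u,v;\mu)=\mu(u^p+\bar u)+v^q+\bar v$ is an excellent map $\mathbb{R}^4\to\mathbb{R}^2$, then there exists a linear deformation $f_t$, $t\in[0,1]$, of $f$ consisting of excellent maps for $t\in(0,1]$ and satisfying $f_1(z,w)=f(z,w)+a\bar z+b\bar w$. Moreover, if $P$ has no definite fold, then neither does $f_t$ for any $t\in(0,1]$.
   Context: A linear deformation of $f$ is a family $f_t(z,w)=f(z,w)+a_1(t)z+b_1(t)w+a_2(t)\bar z+b_2(t)\bar w$, $t\in[0,1]$, with $a_1,b_1,a_2,b_2$ real-analytic complex-valued functions of $t$ vanishing at $t=0$. A smooth map $g:X^4\to Y^2$ is an excellent map if for every point there are local coordinates centered at it and its image in which $g$ is one of: $(x_1,x_2)$; $(x_1,x_2^2+x_3^2+x_4^2)$ (definite fold); $(x_1,x_2^2+x_3^2-x_4^2)$ (indefinite fold); $(x_1,x_2^2\pm x_3^2+x_1x_4+x_4^3)$ (cusp). *)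

theory Defs
  imports "HOL-Analysis.Analysis"
begin

fun iter_dd :: "('a::real_normed_vector \<Rightarrow> 'b::real_normed_vector) \<Rightarrow> 'a list \<Rightarrow> 'a \<Rightarrow> 'b" where
  "iter_dd f [] = f"
| "iter_dd f (v # vs) = (\<lambda>x. frechet_derivative (iter_dd f vs) (at x) v)"

definition smooth_on :: "'a::real_normed_vector set \<Rightarrow> ('a \<Rightarrow> 'b::real_normed_vector) \<Rightarrow> bool" where
  "smooth_on S f \<longleftrightarrow> open S \<and> (\<forall>vs. \<forall>x\<in>S. iter_dd f vs differentiable (at x))"

definition diffeo_onto :: "'a::real_normed_vector set \<Rightarrow> 'b::real_normed_vector set \<Rightarrow> ('a \<Rightarrow> 'b) \<Rightarrow> bool" where
  "diffeo_onto U V \<phi> \<longleftrightarrow> open U \<and> open V \<and> bij_betw \<phi> U V \<and> smooth_on U \<phi> \<and> smooth_on V (inv_into U \<phi>)"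

type_synonym R4 = "real \<times> real \<times> real \<times> real"
type_synonym R2 = "real \<times> real"

definition locally_of_form ::
  "('a::real_normed_vector \<Rightarrow> 'b::real_normed_vector) \<Rightarrow> 'a \<Rightarrow> (R4 \<Rightarrow> R2) \<Rightarrow> bool" where
  "locally_of_form g x N \<longleftrightarrow>
     (\<exists>U V (\<phi>::'a \<Rightarrow> R4) (\<psi>::'b \<Rightarrow> R2).
        x \<in> U \<and> g x \<in> V \<and> g ` U \<subseteq> V \<and>
        diffeo_onto U (\<phi> ` U) \<phi> \<and> \<phi> x = 0 \<and>
        diffeo_onto V (\<psi> ` V) \<psi> \<and> \<psi> (g x) = 0 \<and>
        (\<forall>y\<in>U. \<psi> (g y) = N (\<phi> y)))"

definition regular_form :: "R4 \<Rightarrow> R2" where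
  "regular_form = (\<lambda>(x1, x2, x3, x4). (x1, x2))"
definition definite_fold_form :: "R4 \<Rightarrow> R2" where
  "definite_fold_form = (\<lambda>(x1, x2, x3, x4). (x1, x2^2 + x3^2 + x4^2))"
definition indefinite_fold_form :: "R4 \<Rightarrow> R2" where
  "indefinite_fold_form = (\<lambda>(x1, x2, x3, x4). (x1, x2^2 + x3^2 - x4^2))"
definition cusp_plus_form :: "R4 \<Rightarrow> R2" where
  "cusp_plus_form = (\<lambda>(x1, x2, x3, x4). (x1, x2^2 + x3^2 + x1 * x4 + x4^3))"
definition cusp_minus_form :: "R4 \<Rightarrow> R2" where
  "cusp_minus_form = (\<lambda>(x1, x2, x3, x4). (x1, x2^2 - x3^2 + x1 * x4 + x4^3))"

definition excellent :: "(complex \<times> complex \<Rightarrow> complex) \<Rightarrow> bool" where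
  "excellent g \<longleftrightarrow> smooth_on UNIV g \<and>
     (\<forall>x. \<exists>N \<in> {regular_form, definite_fold_form, indefinite_fold_form,
                  cusp_plus_form, cusp_minus_form}. locally_of_form g x N)"

definition has_definite_fold :: "(complex \<times> complex \<Rightarrow> complex) \<Rightarrow> bool" where
  "has_definite_fold g \<longleftrightarrow> (\<exists>x. locally_of_form g x definite_fold_form)"

definition real_analytic_on :: "real set \<Rightarrow> (real \<Rightarrow> complex) \<Rightarrow> bool" where
  "real_analytic_on S a \<longleftrightarrow>
     (\<forall>t\<in>S. \<exists>r>0. \<exists>c::nat \<Rightarrow> complex.
        \<forall>s\<in>S. \<bar>s - t\<bar> < r \<longrightarrow> (\<lambda>n. c n * complex_of_real ((s - t) ^ n)) sums a s)"

definition lin_def ::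
  "(complex \<Rightarrow> complex \<Rightarrow> complex) \<Rightarrow> (real \<Rightarrow> complex) \<Rightarrow> (real \<Rightarrow> complex) \<Rightarrow>
   (real \<Rightarrow> complex) \<Rightarrow> (real \<Rightarrow> complex) \<Rightarrow> real \<Rightarrow> complex \<times> complex \<Rightarrow> complex" where
  "lin_def f a1 b1 a2 b2 t = (\<lambda>(z, w). f z w + a1 t * z + b1 t * w + a2 t * cnj z + b2 t * cnj w)"

definition is_linear_deformation ::
  "(real \<Rightarrow> complex) \<Rightarrow> (real \<Rightarrow> complex) \<Rightarrow> (real \<Rightarrow> complex) \<Rightarrow> (real \<Rightarrow> complex) \<Rightarrow> bool" where
  "is_linear_deformation a1 b1 a2 b2 \<longleftrightarrow>
     real_analytic_on {0..1} a1 \<and> real_analytic_on {0..1} b1 \<and>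
     real_analytic_on {0..1} a2 \<and> real_analytic_on {0..1} b2 \<and>
     a1 0 = 0 \<and> b1 0 = 0 \<and> a2 0 = 0 \<and> b2 0 = 0"

end

theory Submission
  imports Defs
begin

text \<open>Take a1 = b1 = 0, a2(t) = a t^((p-1)q) and b2(t) = b t^((q-1)p). Since
  c1^p = a cnj(c1) and c2^q = b cnj(c2), the substitution z = t^q c1 u, w = t^p c2 v turns
  f_t(z,w) into t^(pq) b cnj(c2) P(u,v;\<mu>). Hence for t > 0 every f_t is P composed with
  real-linear isomorphisms of source and target, and both being excellent and having a
  definite fold are invariant under such changes of coordinates.\<close>

definition bounded_linear_equiv :: "('a::real_normed_vector \<Rightarrow> 'b::real_normed_vector) \<Rightarrow> ('b \<Rightarrow> 'a) \<Rightarrow> bool" where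
  "bounded_linear_equiv L L' \<longleftrightarrow>
     bounded_linear L \<and> bounded_linear L' \<and> (\<forall>x. L (L' x) = x) \<and> (\<forall>x. L' (L x) = x)"

lemma bounded_linear_equiv_sym: "bounded_linear_equiv L L' \<Longrightarrow> bounded_linear_equiv L' L"
  unfolding bounded_linear_equiv_def by blast

lemma bounded_linear_equiv_mult_left:
  fixes c :: "'a::real_normed_field"
  assumes "c \<noteq> 0"
  shows "bounded_linear_equiv (\<lambda>x. c * x) (\<lambda>x. inverse c * x)"
  using assms unfolding bounded_linear_equiv_def by (simp add: bounded_linear_mult_right)

lemma bounded_linear_equiv_map_prod:
  assumes "bounded_linear_equiv L L'" "bounded_linear_equiv M M'"
  shows "bounded_linear_equiv (map_prod L M) (map_prod L' M')"
proof -
  have bl: "bounded_linear (map_prod F G)" if "bounded_linear F" "bounded_linear G" for F G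
  proof -
    have "bounded_linear (\<lambda>x. (F (fst x), G (snd x)))"
      by (intro bounded_linear_Pair bounded_linear_compose[OF that(1)]
          bounded_linear_compose[OF that(2)] bounded_linear_fst bounded_linear_snd)
    then show ?thesis by (simp add: map_prod_def case_prod_beta')
  qed
  from assms show ?thesis unfolding bounded_linear_equiv_def by (auto intro!: bl)
qed

lemma frechet_derivative_transform_open:
  assumes "open S" "x \<in> S" "\<And>y. y \<in> S \<Longrightarrow> f y = g y" "f differentiable (at x)"
  shows "g differentiable (at x)" "frechet_derivative g (at x) = frechet_derivative f (at x)"
proof -
  have "(g has_derivative frechet_derivative f (at x)) (at x)"
    using has_derivative_transform_within_open[OF _ assms(1,2)] assms(3,4)
      frechet_derivative_works by blast
  then show "g differentiable (at x)" "frechet_derivative g (at x) = frechet_derivative f (at x)"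
    using frechet_derivative_at differentiable_def by metis+
qed

lemma frechet_derivative_compose_bounded_linear:
  assumes "bounded_linear L" "g differentiable (at (L x))"
  shows "(\<lambda>y. g (L y)) differentiable (at x)"
    "frechet_derivative (\<lambda>y. g (L y)) (at x) = (\<lambda>v. frechet_derivative g (at (L x)) (L v))"
proof -
  have "(g has_derivative frechet_derivative g (at (L x))) (at (L x))"
    using assms(2) frechet_derivative_works by blast
  from diff_chain_at[OF bounded_linear_imp_has_derivative[OF assms(1)] this]
  have "((\<lambda>y. g (L y)) has_derivative (\<lambda>v. frechet_derivative g (at (L x)) (L v))) (at x)"
    by (simp add: o_def)
  then show "(\<lambda>y. g (L y)) differentiable (at x)"
    "frechet_derivative (\<lambda>y. g (L y)) (at x) = (\<lambda>v. frechet_derivative g (at (L x)) (L v))"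
    using frechet_derivative_at differentiable_def by metis+
qed

lemma frechet_derivative_bounded_linear_compose:
  assumes "bounded_linear M" "g differentiable (at x)"
  shows "(\<lambda>y. M (g y)) differentiable (at x)"
    "frechet_derivative (\<lambda>y. M (g y)) (at x) = (\<lambda>v. M (frechet_derivative g (at x) v))"
proof -
  have "(g has_derivative frechet_derivative g (at x)) (at x)"
    using assms(2) frechet_derivative_works by blast
  from diff_chain_at[OF this bounded_linear_imp_has_derivative[OF assms(1)]]
  have "((\<lambda>y. M (g y)) has_derivative (\<lambda>v. M (frechet_derivative g (at x) v))) (at x)"
    by (simp add: o_def)
  then show "(\<lambda>y. M (g y)) differentiable (at x)"
    "frechet_derivative (\<lambda>y. M (g y)) (at x) = (\<lambda>v. M (frechet_derivative g (at x) v))"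
    using frechet_derivative_at differentiable_def by metis+
qed

lemma smooth_on_cong:
  assumes f: "smooth_on S f" and fg: "\<And>x. x \<in> S \<Longrightarrow> f x = g x"
  shows "smooth_on S g"
proof -
  have S: "open S" using f smooth_on_def by blast
  have eq: "\<forall>x\<in>S. iter_dd g vs x = iter_dd f vs x" for vs
  proof (induction vs)
    case (Cons v vs)
    show ?case
    proof
      fix x assume x: "x \<in> S"
      have "iter_dd f vs differentiable (at x)" using f x smooth_on_def by blast
      then have "frechet_derivative (iter_dd g vs) (at x) = frechet_derivative (iter_dd f vs) (at x)"
        by (rule frechet_derivative_transform_open(2)[OF S x, rotated]) (use Cons in auto)
      then show "iter_dd g (v # vs) x = iter_dd f (v # vs) x" by simp
    qed
  qed (simp add: fg)
  have "iter_dd g vs differentiable (at x)" if x: "x \<in> S" for vs x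
  proof (rule frechet_derivative_transform_open(1)[OF S x])
    show "iter_dd f vs differentiable (at x)" using f x smooth_on_def by blast
  qed (use eq in auto)
  with S show ?thesis unfolding smooth_on_def by blast
qed

lemma smooth_on_compose_bounded_linear:
  assumes L: "bounded_linear L" and f: "smooth_on S f" and T: "open T" "L ` T \<subseteq> S"
  shows "smooth_on T (\<lambda>x. f (L x))"
proof -
  have f_diff: "iter_dd f vs differentiable (at (L x))" if "x \<in> T" for vs x
    using f T(2) that unfolding smooth_on_def by blast
  note chain = frechet_derivative_compose_bounded_linear[OF L f_diff]
  have eq: "\<forall>x\<in>T. iter_dd (\<lambda>x. f (L x)) vs x = iter_dd f (map L vs) (L x)" for vs
  proof (induction vs)
    case (Cons v vs)
    show ?case
    proof
      fix x assume x: "x \<in> T"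
      have "frechet_derivative (iter_dd (\<lambda>x. f (L x)) vs) (at x)
          = frechet_derivative (\<lambda>y. iter_dd f (map L vs) (L y)) (at x)"
        by (rule frechet_derivative_transform_open(2)[OF T(1) x _ chain(1)[OF x]])
          (use Cons in simp)
      also have "\<dots> = (\<lambda>v. frechet_derivative (iter_dd f (map L vs)) (at (L x)) (L v))"
        by (rule chain(2)[OF x])
      finally show "iter_dd (\<lambda>x. f (L x)) (v # vs) x = iter_dd f (map L (v # vs)) (L x)"
        by simp
    qed
  qed simp
  have "iter_dd (\<lambda>x. f (L x)) vs differentiable (at x)" if x: "x \<in> T" for vs x
    by (rule frechet_derivative_transform_open(1)[OF T(1) x _ chain(1)[OF x]]) (use eq in simp)
  with T(1) show ?thesis unfolding smooth_on_def by blast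
qed

lemma smooth_on_bounded_linear_compose:
  assumes M: "bounded_linear M" and f: "smooth_on S f"
  shows "smooth_on S (\<lambda>x. M (f x))"
proof -
  have S: "open S" and f_diff: "\<And>vs x. x \<in> S \<Longrightarrow> iter_dd f vs differentiable (at x)"
    using f unfolding smooth_on_def by blast+
  note chain = frechet_derivative_bounded_linear_compose[OF M f_diff]
  have eq: "\<forall>x\<in>S. iter_dd (\<lambda>x. M (f x)) vs x = M (iter_dd f vs x)" for vs
  proof (induction vs)
    case (Cons v vs)
    show ?case
    proof
      fix x assume x: "x \<in> S"
      have "frechet_derivative (iter_dd (\<lambda>x. M (f x)) vs) (at x)
          = frechet_derivative (\<lambda>y. M (iter_dd f vs y)) (at x)"
        by (rule frechet_derivative_transform_open(2)[OF S x _ chain(1)[OF x]])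
          (use Cons in simp)
      also have "\<dots> = (\<lambda>v. M (frechet_derivative (iter_dd f vs) (at x) v))"
        by (rule chain(2)[OF x])
      finally show "iter_dd (\<lambda>x. M (f x)) (v # vs) x = M (iter_dd f (v # vs) x)"
        by simp
    qed
  qed simp
  have "iter_dd (\<lambda>x. M (f x)) vs differentiable (at x)" if x: "x \<in> S" for vs x
    by (rule frechet_derivative_transform_open(1)[OF S x _ chain(1)[OF x]]) (use eq in simp)
  with S show ?thesis unfolding smooth_on_def by blast
qed

lemma diffeo_onto_compose_bounded_linear_equiv:
  assumes L: "bounded_linear_equiv L L'" and \<phi>: "diffeo_onto U W \<phi>"
  shows "diffeo_onto (L -` U) W (\<lambda>x. \<phi> (L x))"
proof -
  have lin: "bounded_linear L" "bounded_linear L'" and inv: "\<And>x. L (L' x) = x" "\<And>x. L' (L x) = x"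
    using L unfolding bounded_linear_equiv_def by auto
  have U: "open U" "open W" "bij_betw \<phi> U W" "smooth_on U \<phi>" "smooth_on W (inv_into U \<phi>)"
    using \<phi> unfolding diffeo_onto_def by auto
  have open_preimage: "open (L -` U)"
    using continuous_open_vimage[OF U(1)] linear_continuous_at[OF lin(1)] by blast
  have "bij_betw L (L -` U) U"
    by (rule bij_betw_byWitness[where f' = L']) (use inv in auto)
  then have bij: "bij_betw (\<lambda>x. \<phi> (L x)) (L -` U) W"
    using bij_betw_trans[OF _ U(3)] by (simp add: o_def)
  have "smooth_on (L -` U) (\<lambda>x. \<phi> (L x))"
    by (rule smooth_on_compose_bounded_linear[OF lin(1) U(4) open_preimage]) auto
  moreover have "smooth_on W (inv_into (L -` U) (\<lambda>x. \<phi> (L x)))"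
  proof (rule smooth_on_cong[OF smooth_on_bounded_linear_compose[OF lin(2) U(5)]])
    fix w assume "w \<in> W"
    then have "inv_into U \<phi> w \<in> U" "\<phi> (inv_into U \<phi> w) = w"
      using U(3) bij_betw_inv_into_left bij_betw_imp_surj_on inv_into_into f_inv_into_f by metis+
    then show "L' (inv_into U \<phi> w) = inv_into (L -` U) (\<lambda>x. \<phi> (L x)) w"
      using bij inv by (intro inv_into_f_eq[symmetric]) (auto simp: bij_betw_def)
  qed
  ultimately show ?thesis
    using open_preimage U(2) bij unfolding diffeo_onto_def by blast
qed

lemma locally_of_form_bounded_linear_equiv:
  fixes g :: "'a::real_normed_vector \<Rightarrow> 'b::real_normed_vector"
  assumes L: "bounded_linear_equiv L L'" and M: "bounded_linear_equiv M M'"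
    and g: "locally_of_form g (L x) N"
  shows "locally_of_form (\<lambda>z. M (g (L z))) x N"
proof -
  obtain U V and \<phi> :: "'a \<Rightarrow> R4" and \<psi> :: "'b \<Rightarrow> R2" where
    UV: "L x \<in> U" "g (L x) \<in> V" "g ` U \<subseteq> V" "diffeo_onto U (\<phi> ` U) \<phi>" "\<phi> (L x) = 0"
      "diffeo_onto V (\<psi> ` V) \<psi>" "\<psi> (g (L x)) = 0" "\<forall>y\<in>U. \<psi> (g y) = N (\<phi> y)"
    using g unfolding locally_of_form_def by blast
  have M': "bounded_linear_equiv M' M" and inv: "\<And>y. M' (M y) = y"
    using M bounded_linear_equiv_sym unfolding bounded_linear_equiv_def by auto
  have \<phi>L: "diffeo_onto (L -` U) (\<phi> ` U) (\<lambda>z. \<phi> (L z))"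
    by (rule diffeo_onto_compose_bounded_linear_equiv[OF L UV(4)])
  have \<psi>M': "diffeo_onto (M' -` V) (\<psi> ` V) (\<lambda>y. \<psi> (M' y))"
    by (rule diffeo_onto_compose_bounded_linear_equiv[OF M' UV(6)])
  have "(\<lambda>z. \<phi> (L z)) ` (L -` U) = \<phi> ` U" "(\<lambda>y. \<psi> (M' y)) ` (M' -` V) = \<psi> ` V"
    using \<phi>L \<psi>M' unfolding diffeo_onto_def bij_betw_def by blast+
  with \<phi>L \<psi>M' show ?thesis
    unfolding locally_of_form_def
    by (intro exI[of _ "L -` U"] exI[of _ "M' -` V"] exI[of _ "\<lambda>z. \<phi> (L z)"] exI[of _ "\<lambda>y. \<psi> (M' y)"])
      (use UV inv in auto)
qed

lemma excellent_bounded_linear_equiv: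
  assumes L: "bounded_linear_equiv L L'" and M: "bounded_linear_equiv M M'" and g: "excellent g"
  shows "excellent (\<lambda>z. M (g (L z)))"
  unfolding excellent_def
proof (intro conjI allI)
  have "bounded_linear L" "bounded_linear M"
    using L M unfolding bounded_linear_equiv_def by simp_all
  moreover have "smooth_on UNIV g" using g unfolding excellent_def by (rule conjunct1)
  ultimately show "smooth_on UNIV (\<lambda>z. M (g (L z)))"
    by (intro smooth_on_bounded_linear_compose[of M] smooth_on_compose_bounded_linear[of L UNIV g]) auto
next
  fix x
  from g[unfolded excellent_def, THEN conjunct2, rule_format, of "L x"]
  obtain N where N: "N \<in> {regular_form, definite_fold_form, indefinite_fold_form,
      cusp_plus_form, cusp_minus_form}" "locally_of_form g (L x) N"
    by (rule bexE)
  show "\<exists>N \<in> {regular_form, definite_fold_form, indefinite_fold_form,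
      cusp_plus_form, cusp_minus_form}. locally_of_form (\<lambda>z. M (g (L z))) x N"
    using locally_of_form_bounded_linear_equiv[OF L M N(2)] N(1) by (rule bexI)
qed

lemma has_definite_fold_bounded_linear_equiv:
  assumes L: "bounded_linear_equiv L L'" and M: "bounded_linear_equiv M M'"
  shows "has_definite_fold (\<lambda>z. M (g (L z))) \<longleftrightarrow> has_definite_fold g"
proof -
  have inv: "\<And>x. L (L' x) = x" "\<And>x. L' (L x) = x" "\<And>y. M' (M y) = y"
    using L M unfolding bounded_linear_equiv_def by blast+
  have "locally_of_form g (L y) definite_fold_form"
    if "locally_of_form (\<lambda>z. M (g (L z))) y definite_fold_form" for y
    using locally_of_form_bounded_linear_equiv[OF bounded_linear_equiv_sym[OF L]
        bounded_linear_equiv_sym[OF M], of "\<lambda>z. M (g (L z))" "L y"] that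
    by (simp add: inv)
  moreover have "locally_of_form (\<lambda>z. M (g (L z))) (L' y) definite_fold_form"
    if "locally_of_form g y definite_fold_form" for y
    using locally_of_form_bounded_linear_equiv[OF L M, of g "L' y"] that by (simp add: inv)
  ultimately show ?thesis unfolding has_definite_fold_def by blast
qed

lemma real_analytic_on_mult_power: "real_analytic_on S (\<lambda>s. A * complex_of_real (s ^ n))"
  unfolding real_analytic_on_def
proof (intro ballI exI conjI allI impI)
  fix t s :: real
  define c where "c k = (if k \<le> n then A * complex_of_real (of_nat (n choose k) * t ^ (n - k)) else 0)"
    for k
  have "(\<lambda>k. c k * complex_of_real ((s - t) ^ k)) sums (\<Sum>k\<le>n. c k * complex_of_real ((s - t) ^ k))"
    by (rule sums_finite) (auto simp: c_def)
  moreover have "(\<Sum>k\<le>n. c k * complex_of_real ((s - t) ^ k)) = A * complex_of_real (((s - t) + t) ^ n)"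
    unfolding binomial_ring by (simp add: c_def sum_distrib_left mult_ac)
  ultimately show "(\<lambda>k. c k * complex_of_real ((s - t) ^ k)) sums (A * complex_of_real (s ^ n))"
    by simp
qed (rule zero_less_one)

lemma brieskorn_deformation_rescaled:
  fixes a b c1 c2 u v :: complex and t :: real
  assumes "p \<ge> 1" "q \<ge> 1" "c1 ^ p = a * cnj c1" "c2 ^ q = b * cnj c2"
  shows "lin_def (\<lambda>z w. z ^ p + w ^ q) (\<lambda>_. 0) (\<lambda>_. 0)
           (\<lambda>t. a * complex_of_real (t ^ ((p - 1) * q))) (\<lambda>t. b * complex_of_real (t ^ ((q - 1) * p))) t
           (complex_of_real (t ^ q) * c1 * u, complex_of_real (t ^ p) * c2 * v)
         = complex_of_real (t ^ (p * q)) * (a * cnj c1 * (u ^ p + cnj u) + b * cnj c2 * (v ^ q + cnj v))"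
proof -
  have "(p - 1) * q + q = p * q" "(q - 1) * p + p = p * q"
    using assms(1,2) by (simp_all add: diff_mult_distrib)
  then have "t ^ ((p - 1) * q) * t ^ q = t ^ (p * q)" "t ^ ((q - 1) * p) * t ^ p = t ^ (p * q)"
    "(t ^ q) ^ p = t ^ (p * q)" "(t ^ p) ^ q = t ^ (p * q)"
    by (metis power_add, metis power_add, simp_all add: power_mult[symmetric] mult.commute)
  then show ?thesis
    unfolding lin_def_def
    by (simp add: power_mult_distrib assms(3,4) algebra_simps flip: of_real_power of_real_mult)
qed

lemma brieskorn_deformation_linearly_equivalent:
  fixes a b c1 c2 :: complex and t :: real
  assumes "p \<ge> 1" "q \<ge> 1" "b \<noteq> 0" "c1 \<noteq> 0" "c2 \<noteq> 0"
    and "c1 ^ p = a * cnj c1" "c2 ^ q = b * cnj c2" and "t > 0"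
  shows "\<exists>L L' M M'. bounded_linear_equiv L L' \<and> bounded_linear_equiv M M' \<and>
           lin_def (\<lambda>z w. z ^ p + w ^ q) (\<lambda>_. 0) (\<lambda>_. 0)
             (\<lambda>t. a * complex_of_real (t ^ ((p - 1) * q))) (\<lambda>t. b * complex_of_real (t ^ ((q - 1) * p))) t
           = (\<lambda>z. M ((\<lambda>(u, v). (a * cnj c1 / (b * cnj c2)) * (u ^ p + cnj u) + v ^ q + cnj v) (L z)))"
proof -
  define P where "P = (\<lambda>(u, v). (a * cnj c1 / (b * cnj c2)) * (u ^ p + cnj u) + v ^ q + cnj v)"
  define F where "F = lin_def (\<lambda>z w. z ^ p + w ^ q) (\<lambda>_. 0) (\<lambda>_. 0)
    (\<lambda>t. a * complex_of_real (t ^ ((p - 1) * q))) (\<lambda>t. b * complex_of_real (t ^ ((q - 1) * p))) t"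
  define l k K where "l = complex_of_real (t ^ q) * c1" and "k = complex_of_real (t ^ p) * c2"
    and "K = complex_of_real (t ^ (p * q)) * b * cnj c2"
  have nonzero: "l \<noteq> 0" "k \<noteq> 0" "K \<noteq> 0"
    using assms(3-5,8) by (simp_all add: l_def k_def K_def)
  define S S' where "S = map_prod (\<lambda>x. l * x) (\<lambda>x. k * x)"
    and "S' = map_prod (\<lambda>x. inverse l * x) (\<lambda>x. inverse k * x)"
  have S: "bounded_linear_equiv S S'"
    unfolding S_def S'_def
    by (intro bounded_linear_equiv_map_prod bounded_linear_equiv_mult_left nonzero)
  have rescaled: "F (S (u, v)) = K * P (u, v)" for u v
  proof -
    have "F (S (u, v)) = complex_of_real (t ^ (p * q)) *
        (a * cnj c1 * (u ^ p + cnj u) + b * cnj c2 * (v ^ q + cnj v))"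
      using brieskorn_deformation_rescaled[OF assms(1,2,6,7), of t u v]
      unfolding F_def S_def l_def k_def by (simp add: mult.assoc)
    also have "\<dots> = K * P (u, v)"
      using assms(3,5) by (simp add: K_def P_def field_simps)
    finally show ?thesis .
  qed
  have "F = (\<lambda>z. K * P (S' z))"
  proof
    fix z
    have "z = S (S' z)" using S unfolding bounded_linear_equiv_def by metis
    then show "F z = K * P (S' z)" using rescaled by (metis prod.collapse)
  qed
  then show ?thesis
    using bounded_linear_equiv_sym[OF S] bounded_linear_equiv_mult_left[OF nonzero(3)]
    unfolding F_def P_def by blast
qed

theorem lemma3p1:
  fixes p q :: nat and a b c1 c2 :: complex
  assumes "p \<ge> 2" and "q \<ge> 2"
    and "a \<noteq> 0" and "b \<noteq> 0"
    and "c1 \<noteq> 0" and "c2 \<noteq> 0"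
    and "c1 ^ p = a * cnj c1" and "c2 ^ q = b * cnj c2"
    and "excellent (\<lambda>(u, v). (a * cnj c1 / (b * cnj c2)) * (u ^ p + cnj u) + v ^ q + cnj v)"
  shows "\<exists>a1 b1 a2 b2. is_linear_deformation a1 b1 a2 b2 \<and>
           (\<forall>t\<in>{0<..1}. excellent (lin_def (\<lambda>z w. z ^ p + w ^ q) a1 b1 a2 b2 t)) \<and>
           lin_def (\<lambda>z w. z ^ p + w ^ q) a1 b1 a2 b2 1 = (\<lambda>(z, w). z ^ p + w ^ q + a * cnj z + b * cnj w) \<and>
           (\<not> has_definite_fold (\<lambda>(u, v). (a * cnj c1 / (b * cnj c2)) * (u ^ p + cnj u) + v ^ q + cnj v) \<longrightarrow>
              (\<forall>t\<in>{0<..1}. \<not> has_definite_fold (lin_def (\<lambda>z w. z ^ p + w ^ q) a1 b1 a2 b2 t)))"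
proof -
  define a2 where "a2 = (\<lambda>t. a * complex_of_real (t ^ ((p - 1) * q)))"
  define b2 where "b2 = (\<lambda>t. b * complex_of_real (t ^ ((q - 1) * p)))"
  have pq: "p \<ge> 1" "q \<ge> 1" using assms(1,2) by simp_all
  let ?P = "\<lambda>(u, v). (a * cnj c1 / (b * cnj c2)) * (u ^ p + cnj u) + v ^ q + cnj v"
  let ?F = "lin_def (\<lambda>z w. z ^ p + w ^ q) (\<lambda>_. 0) (\<lambda>_. 0) a2 b2"
  have "is_linear_deformation (\<lambda>_. 0) (\<lambda>_. 0) a2 b2"
    using real_analytic_on_mult_power[of _ 0 0] real_analytic_on_mult_power[of _ a]
      real_analytic_on_mult_power[of _ b] assms(1,2)
    unfolding is_linear_deformation_def a2_def b2_def by simp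
  moreover have "?F 1 = (\<lambda>(z, w). z ^ p + w ^ q + a * cnj z + b * cnj w)"
    unfolding lin_def_def a2_def b2_def by simp
  moreover have "excellent (?F t) \<and> (\<not> has_definite_fold ?P \<longrightarrow> \<not> has_definite_fold (?F t))"
    if "t \<in> {0<..1}" for t
  proof -
    from that have "t > 0" by simp
    from brieskorn_deformation_linearly_equivalent[OF pq assms(4-8) this]
    obtain L L' M M' where L: "bounded_linear_equiv L L'" and M: "bounded_linear_equiv M M'"
      and F: "?F t = (\<lambda>z. M (?P (L z)))"
      unfolding a2_def b2_def by blast
    show ?thesis
      unfolding F using excellent_bounded_linear_equiv[OF L M assms(9)]
        has_definite_fold_bounded_linear_equiv[OF L M] by blast
  qed
  ultimately show ?thesis by blast
qed

end
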